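(* Let $k_1=(1,0)$, $k_2=(-\tfrac12,\tfrac{\sqrt3}{2})$, $k_3=(-\tfrac12,-\tfrac{\sqrt3}{2})$, let $\Lambda=\{x\in\mathbb R^2: k_1\cdot x\in2\pi\mathbb Z,\ k_2\cdot x\in2\pi\mathbb Z\}$, let $\phi(x)=\sum_{j=1}^3\cos(k_j\cdot x)$, and for $\varepsilon\in\mathbb R$ let $f_\varepsilon=Z_\varepsilon^{-1}e^{\varepsilon\phi}$ with $Z_\varepsilon=\langle e^{\varepsilon\phi}\rangle$, a probability density on the torus $\mathbb R^2/\Lambda$ with respect to normalized Haar measure. Then, as $\varepsilon\to0$, \[ \mathcal I[f_\varepsilon]=\tfrac32\varepsilon^2+\tfrac34\varepsilon^3+O(\varepsilon^4),\quad \mathcal Q[f_\varepsilon]=\tfrac32\varepsilon^2+\tfrac38\varepsilon^3+O(\varepsilon^4),\quad \mathcal D[f_\varepsilon]=\tfrac32\varepsilon^2-\tfrac3{16}\varepsilon^3+O(\varepsilon^4). \] Consequently \[ \mathcal I[f_\varepsilon]\mathcal D[f_\varepsilon]-\mathcal Q[f_\varepsilon]^2=-\tfrac9{32}\varepsilon^5+O(\varepsilon^6),\qquad \frac{\mathcal I[f_\varepsilon]\mathcal D[f_\varepsilon]}{\mathcal Q[f_\varepsilon]^2}=1-\tfrac18\varepsilon+O(\varepsilon^2), \] so $\mathcal I[f_\varepsilon]\mathcal D[f_\varepsilon]-\mathcal Q[f_\varepsilon]^2<0$ for all sufficiently small $\varepsilon>0$.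
   Context: $\langle G\rangle$ denotes the normalized Haar average of a $\Lambda$-periodic function $G$ (average over a fundamental cell). For a positive smooth density $f=e^u$ on the torus (normalized so $\langle f\rangle=1$), set $\mathsf H_f=-\nabla^2u$ and define $\mathcal I[f]=\langle\operatorname{tr}(\mathsf H_f)f\rangle$, $\mathcal Q[f]=\langle\operatorname{tr}(\mathsf H_f^2)f\rangle$, $\mathcal D[f]=\langle(|\nabla\mathsf H_f|^2+2\operatorname{tr}(\mathsf H_f^3))f\rangle$, where $|\nabla\mathsf H_f|^2=\sum_{i,j,k}(\partial_k(\mathsf H_f)_{ij})^2$. *)

theory Defs
  imports "HOL-Analysis.Analysis" "HOL-Library.Landau_Symbols"
begin

definition kv1 :: "real^2" where "kv1 = vector [1, 0]"
definition kv2 :: "real^2" where "kv2 = vector [-1/2, sqrt 3 / 2]"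
definition kv3 :: "real^2" where "kv3 = vector [-1/2, - sqrt 3 / 2]"

definition lattice :: "(real^2) set" where
  "lattice = {x. (\<exists>m::int. kv1 \<bullet> x = 2 * pi * m) \<and> (\<exists>n::int. kv2 \<bullet> x = 2 * pi * n)}"

definition cell :: "(real^2) set" where
  "cell = {x. 0 \<le> kv1 \<bullet> x \<and> kv1 \<bullet> x \<le> 2 * pi \<and> 0 \<le> kv2 \<bullet> x \<and> kv2 \<bullet> x \<le> 2 * pi}"

text \<open>Normalized Haar average: average over a fundamental cell.\<close>
definition haar_avg :: "(real^2 \<Rightarrow> real) \<Rightarrow> real" where
  "haar_avg G = integral cell G / measure lebesgue cell"

definition pd :: "2 \<Rightarrow> (real^2 \<Rightarrow> real) \<Rightarrow> real^2 \<Rightarrow> real" where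
  "pd i g x = deriv (\<lambda>t. g (x + t *\<^sub>R axis i 1)) 0"

definition Hf :: "(real^2 \<Rightarrow> real) \<Rightarrow> 2 \<Rightarrow> 2 \<Rightarrow> real^2 \<Rightarrow> real" where
  "Hf f i j x = - pd i (pd j (\<lambda>y. ln (f y))) x"

definition trH :: "(real^2 \<Rightarrow> real) \<Rightarrow> real^2 \<Rightarrow> real" where
  "trH f x = (\<Sum>i\<in>UNIV. Hf f i i x)"
definition trH2 :: "(real^2 \<Rightarrow> real) \<Rightarrow> real^2 \<Rightarrow> real" where
  "trH2 f x = (\<Sum>i\<in>UNIV. \<Sum>j\<in>UNIV. Hf f i j x * Hf f j i x)"
definition trH3 :: "(real^2 \<Rightarrow> real) \<Rightarrow> real^2 \<Rightarrow> real" where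
  "trH3 f x = (\<Sum>i\<in>UNIV. \<Sum>j\<in>UNIV. \<Sum>k\<in>UNIV. Hf f i j x * Hf f j k x * Hf f k i x)"
definition gradH_sq :: "(real^2 \<Rightarrow> real) \<Rightarrow> real^2 \<Rightarrow> real" where
  "gradH_sq f x = (\<Sum>i\<in>UNIV. \<Sum>j\<in>UNIV. \<Sum>k\<in>UNIV. (pd k (Hf f i j) x)\<^sup>2)"

definition Ifun :: "(real^2 \<Rightarrow> real) \<Rightarrow> real" where
  "Ifun f = haar_avg (\<lambda>x. trH f x * f x)"
definition Qfun :: "(real^2 \<Rightarrow> real) \<Rightarrow> real" where
  "Qfun f = haar_avg (\<lambda>x. trH2 f x * f x)"
definition Dfun :: "(real^2 \<Rightarrow> real) \<Rightarrow> real" where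
  "Dfun f = haar_avg (\<lambda>x. (gradH_sq f x + 2 * trH3 f x) * f x)"

definition phi :: "real^2 \<Rightarrow> real" where
  "phi x = cos (kv1 \<bullet> x) + cos (kv2 \<bullet> x) + cos (kv3 \<bullet> x)"

definition Zeps :: "real \<Rightarrow> real" where
  "Zeps e = haar_avg (\<lambda>x. exp (e * phi x))"

definition feps :: "real \<Rightarrow> real^2 \<Rightarrow> real" where
  "feps e x = exp (e * phi x) / Zeps e"

end

(* In the coordinates a = k1.x, b = k2.x the fundamental cell becomes the square [0, 2 pi]^2
   (the constant Jacobian cancels in the normalized average), and since k3 = -k1 - k2 the
   potential is phi = cos a + cos b + cos (a + b).  As log f_eps = eps phi - log Z_eps, the matrix
   H_f = eps * sum_m k_m k_m^T cos (k_m.x) is explicit: tr H, tr H^2, tr H^3 and |grad H|^2 are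
   powers of eps times trigonometric polynomials P(a, b), so I, Q and D are quotients
   eps^n <P exp (eps phi)> / <exp (eps phi)>.  Expanding exp (eps phi) to second order leaves
   finitely many averages <P phi^m>, which reduce exactly to the moments of cos^i sin^j over a
   period.  The statements on I D - Q^2 and I D / Q^2 then follow by O-arithmetic: the eps^4
   terms of I D and Q^2 agree and their eps^5 terms differ by -9/32. *)

theory Submission
  imports Defs "HOL-Real_Asymp.Real_Asymp"
begin

section \<open>Averages over the square of periods\<close>

definition circle_avg :: "(real \<Rightarrow> real) \<Rightarrow> real" where
  "circle_avg f = integral {0..2*pi} f / (2*pi)"

definition period_square :: "(real \<times> real) set" where
  "period_square = cbox (0, 0) (2*pi, 2*pi)"

definition torus_avg :: "(real \<times> real \<Rightarrow> real) \<Rightarrow> real" where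
  "torus_avg F = integral period_square F / (4*pi^2)"

lemma circle_avg_antiderivative:
  assumes "\<And>x. (F has_real_derivative f x) (at x)"
  shows "circle_avg f = (F (2*pi) - F 0) / (2*pi)"
proof -
  have "(f has_integral F (2*pi) - F 0) {0..2*pi}"
    using assms by (intro fundamental_theorem_of_calculus)
      (auto simp: has_real_derivative_iff_has_vector_derivative[symmetric]
            intro: has_field_derivative_at_within)
  then show ?thesis
    by (simp add: circle_avg_def integral_unique)
qed

lemma integrable_on_period_square:
  "continuous_on UNIV (F :: real \<times> real \<Rightarrow> real) \<Longrightarrow> F integrable_on period_square"
  unfolding period_square_def
  by (rule integrable_continuous) (rule continuous_on_subset, assumption, simp)

lemma torus_avg_add:
  "continuous_on UNIV F \<Longrightarrow> continuous_on UNIV G \<Longrightarrow>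
    torus_avg (\<lambda>p. F p + G p) = torus_avg F + torus_avg G"
  by (simp add: torus_avg_def integral_add integrable_on_period_square add_divide_distrib)

lemma torus_avg_diff:
  "continuous_on UNIV F \<Longrightarrow> continuous_on UNIV G \<Longrightarrow>
    torus_avg (\<lambda>p. F p - G p) = torus_avg F - torus_avg G"
  by (simp add: torus_avg_def integral_diff integrable_on_period_square diff_divide_distrib)

lemma torus_avg_cmult: "torus_avg (\<lambda>p. c * F p) = c * torus_avg F"
  by (simp add: torus_avg_def)

lemma torus_avg_divide: "torus_avg (\<lambda>p. F p / c) = torus_avg F / c"
  using torus_avg_cmult[of "1 / c" F] by simp

lemma torus_avg_sum:
  "finite A \<Longrightarrow> (\<And>m. m \<in> A \<Longrightarrow> continuous_on UNIV (F m)) \<Longrightarrow>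
    torus_avg (\<lambda>p. \<Sum>m\<in>A. F m p) = (\<Sum>m\<in>A. torus_avg (F m))"
  by (simp add: torus_avg_def integral_sum integrable_on_period_square flip: sum_divide_distrib)

lemma measure_period_square: "measure lborel period_square = 4 * pi^2"
  by (simp add: period_square_def content_Pair power2_eq_square)

lemma integral_period_square_const: "integral period_square (\<lambda>p. c) = 4 * pi^2 * c"
  by (simp add: period_square_def content_Pair power2_eq_square)

lemma torus_avg_const: "torus_avg (\<lambda>p. c) = c"
  by (simp add: torus_avg_def integral_period_square_const)

lemma torus_avg_product:
  assumes "continuous_on UNIV f" "continuous_on UNIV g"
  shows "torus_avg (\<lambda>p. f (fst p) * g (snd p)) = circle_avg f * circle_avg g"
proof -
  have "continuous_on period_square (\<lambda>p. f (fst p) * g (snd p))"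
    by (intro continuous_intros continuous_on_compose2[OF assms(1)]
          continuous_on_compose2[OF assms(2)]) auto
  then have "integral period_square (\<lambda>p. f (fst p) * g (snd p))
      = integral {0..2*pi} (\<lambda>x. integral {0..2*pi} (\<lambda>y. f x * g y))"
    unfolding period_square_def by (subst integral_prod_continuous) (auto simp: cbox_interval)
  then show ?thesis
    by (simp add: torus_avg_def circle_avg_def power2_eq_square field_simps)
qed

lemma torus_avg_abs_le:
  assumes "continuous_on UNIV F" "\<And>p. p \<in> period_square \<Longrightarrow> \<bar>F p\<bar> \<le> K"
  shows "\<bar>torus_avg F\<bar> \<le> K"
proof -
  have "0 \<le> K"
    using assms(2)[of "(0, 0)"] by (auto simp: period_square_def)
  then have "norm (integral period_square F) \<le> K * measure lborel period_square"
    using assms unfolding period_square_def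
    by (intro has_integral_bound[OF _ integrable_integral])
       (auto simp: integrable_on_period_square[OF assms(1), unfolded period_square_def])
  then show ?thesis
    by (simp add: torus_avg_def measure_period_square abs_divide pos_divide_le_eq)
qed

lemma torus_avg_ge:
  assumes "continuous_on UNIV F" "\<And>p. c \<le> F p"
  shows "c \<le> torus_avg F"
proof -
  have "integral period_square (\<lambda>p. c) \<le> integral period_square F"
    using assms by (intro integral_le) (auto simp: integrable_on_period_square)
  then show ?thesis
    by (simp add: torus_avg_def integral_period_square_const le_divide_eq mult.commute)
qed

section \<open>Trigonometric moments\<close>

definition cos_sin_power :: "nat \<Rightarrow> nat \<Rightarrow> real \<Rightarrow> real" where
  "cos_sin_power i j x = cos x ^ i * sin x ^ j"

definition cos_sin_moment :: "nat \<Rightarrow> nat \<Rightarrow> real" where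
  "cos_sin_moment i j = circle_avg (cos_sin_power i j)"

lemma continuous_on_cos_sin_power [continuous_intros]:
  fixes f :: "'a::t2_space \<Rightarrow> real"
  shows "continuous_on S f \<Longrightarrow> continuous_on S (\<lambda>x. cos_sin_power i j (f x))"
  unfolding cos_sin_power_def by (intro continuous_intros)

lemma cos_sin_power_mult:
  "cos_sin_power i j x * cos_sin_power i' j' x = cos_sin_power (i + i') (j + j') x"
  by (simp add: cos_sin_power_def power_add)

lemma cos_sin_moment_antiderivative:
  assumes "\<And>x. (F has_real_derivative cos_sin_power i j x) (at x)"
    and "(F (2*pi) - F 0) / (2*pi) = v"
  shows "cos_sin_moment i j = v"
  using circle_avg_antiderivative[OF assms(1)] assms(2) by (simp add: cos_sin_moment_def)

lemma sin_sq_eq: "sin x * sin x = 1 - cos x * cos x" for x :: real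
  using sin_cos_squared_add3[of x] by algebra

lemma cos_sin_moments_low [simp]:
  "cos_sin_moment 0 0 = 1" "cos_sin_moment 1 0 = 0" "cos_sin_moment 0 1 = 0"
  by (rule cos_sin_moment_antiderivative[where i=0 and j=0 and F="\<lambda>x. x"]
        cos_sin_moment_antiderivative[where i=1 and j=0 and F="\<lambda>x. sin x"]
        cos_sin_moment_antiderivative[where i=0 and j=1 and F="\<lambda>x. - cos x"];
      auto intro!: derivative_eq_intros simp: cos_sin_power_def)+

lemma cos_sin_moments_quadratic [simp]:
  "cos_sin_moment 2 0 = 1/2" "cos_sin_moment 0 2 = 1/2" "cos_sin_moment 1 1 = 0"
  by (rule cos_sin_moment_antiderivative[where i=2 and j=0 and F="\<lambda>x. (x + sin x * cos x) / 2"]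
        cos_sin_moment_antiderivative[where i=0 and j=2 and F="\<lambda>x. (x - sin x * cos x) / 2"]
        cos_sin_moment_antiderivative[where i=1 and j=1 and F="\<lambda>x. sin x ^ 2 / 2"];
      auto intro!: derivative_eq_intros
        simp: cos_sin_power_def power2_eq_square algebra_simps sin_sq_eq; simp add: field_simps)+

lemma cos_sin_moments_cubic [simp]:
  "cos_sin_moment 3 0 = 0" "cos_sin_moment 2 1 = 0"
  "cos_sin_moment 1 2 = 0" "cos_sin_moment 0 3 = 0"
  by (rule cos_sin_moment_antiderivative[where i=3 and j=0 and F="\<lambda>x. sin x - sin x ^ 3 / 3"]
        cos_sin_moment_antiderivative[where i=2 and j=1 and F="\<lambda>x. - (cos x ^ 3) / 3"]
        cos_sin_moment_antiderivative[where i=1 and j=2 and F="\<lambda>x. sin x ^ 3 / 3"]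
        cos_sin_moment_antiderivative[where i=0 and j=3 and F="\<lambda>x. cos x ^ 3 / 3 - cos x"];
      auto intro!: derivative_eq_intros
        simp: cos_sin_power_def power2_eq_square power3_eq_cube algebra_simps sin_sq_eq;
      simp add: field_simps)+

text \<open>Trigonometric polynomials in two angles are represented as lists of monomials, so that
  torus averages of their products can be computed by evaluating \<open>trig_avg\<close>.\<close>

type_synonym trig_term = "real \<times> nat \<times> nat \<times> nat \<times> nat"

fun trig_eval :: "trig_term list \<Rightarrow> real \<times> real \<Rightarrow> real" where
  "trig_eval [] p = 0"
| "trig_eval ((c, i, j, k, l) # ts) p =
     c * (cos_sin_power i j (fst p) * cos_sin_power k l (snd p)) + trig_eval ts p"

fun trig_avg :: "trig_term list \<Rightarrow> real" where
  "trig_avg [] = 0"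
| "trig_avg ((c, i, j, k, l) # ts) = c * (cos_sin_moment i j * cos_sin_moment k l) + trig_avg ts"

definition trig_scale :: "real \<Rightarrow> trig_term list \<Rightarrow> trig_term list" where
  "trig_scale a ts = [(a * c, i, j, k, l). (c, i, j, k, l) \<leftarrow> ts]"

definition trig_mult :: "trig_term list \<Rightarrow> trig_term list \<Rightarrow> trig_term list" where
  "trig_mult ts us =
     [(c * d, i + i', j + j', k + k', l + l'). (c, i, j, k, l) \<leftarrow> ts, (d, i', j', k', l') \<leftarrow> us]"

lemma continuous_on_trig_eval [continuous_intros]: "continuous_on S (trig_eval ts)"
proof (induction ts)
  case Nil
  then show ?case by simp
next
  case (Cons t ts)
  then show ?case
    by (cases t) (auto intro!: continuous_intros)
qed

lemma torus_avg_trig_eval: "torus_avg (trig_eval ts) = trig_avg ts"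
proof (induction ts)
  case Nil
  have "trig_eval [] = (\<lambda>p. 0)" by auto
  then show ?case by (simp add: torus_avg_const)
next
  case (Cons t ts)
  obtain c i j k l where t: "t = (c, i, j, k, l)" by (cases t)
  define m where "m p = cos_sin_power i j (fst p) * cos_sin_power k l (snd p)" for p
  have "continuous_on UNIV m"
    unfolding m_def by (intro continuous_intros)
  then have "torus_avg (\<lambda>p. c * m p + trig_eval ts p) = c * torus_avg m + torus_avg (trig_eval ts)"
    by (simp add: torus_avg_add torus_avg_cmult continuous_intros)
  moreover have "torus_avg m = cos_sin_moment i j * cos_sin_moment k l"
    unfolding m_def cos_sin_moment_def
    by (intro torus_avg_product continuous_on_cos_sin_power continuous_on_id)
  moreover have "trig_eval (t # ts) = (\<lambda>p. c * m p + trig_eval ts p)"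
    by (auto simp: t m_def)
  ultimately show ?case
    using Cons by (simp add: t)
qed

lemma trig_eval_append: "trig_eval (ts @ us) p = trig_eval ts p + trig_eval us p"
  by (induction ts p rule: trig_eval.induct) auto

lemma trig_eval_scale: "trig_eval (trig_scale a ts) p = a * trig_eval ts p"
  by (induction ts p rule: trig_eval.induct) (auto simp: trig_scale_def algebra_simps)

lemma trig_eval_mult: "trig_eval (trig_mult ts us) p = trig_eval ts p * trig_eval us p"
proof (induction ts p rule: trig_eval.induct)
  case (2 c i j k l ts p)
  have "trig_eval [(c * d, i + i', j + j', k + k', l + l'). (d, i', j', k', l') \<leftarrow> us] p
      = c * (cos_sin_power i j (fst p) * cos_sin_power k l (snd p)) * trig_eval us p"
    by (induction us p rule: trig_eval.induct) (auto simp: algebra_simps simp flip: cos_sin_power_mult)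
  with 2 show ?case
    by (simp add: trig_mult_def trig_eval_append algebra_simps)
qed (simp add: trig_mult_def)

section \<open>Lattice coordinates\<close>

lemma integral_linear_image_real:
  fixes H :: "real^'n::{finite,wellorder} \<Rightarrow> real" and g :: "real^'n::_ \<Rightarrow> real^'n::_"
  assumes g: "linear g" and H: "(H \<circ> g) absolutely_integrable_on S"
  shows "integral (g ` S) H = \<bar>det (matrix g)\<bar> * integral S (H \<circ> g)"
proof -
  define H1 where "H1 x = H x *\<^sub>R (1 :: real^1)" for x
  have H1g: "(H1 \<circ> g) absolutely_integrable_on S"
    using absolutely_integrable_scaleR_right[OF H] by (simp add: H1_def o_def)
  then have "H1 absolutely_integrable_on g ` S"
    using absolutely_integrable_on_linear_image[OF g] by blast
  then have "integral (g ` S) H = integral (g ` S) H1 $ 1"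
    by (simp add: H1_def set_lebesgue_integral_eq_integral(1) flip: integral_component_eq_cart)
  also have "\<dots> = (\<bar>det (matrix g)\<bar> *\<^sub>R integral S (H1 \<circ> g)) $ 1"
    using integral_change_of_variables_linear[OF g, of S H1] H1g by simp
  also have "\<dots> = \<bar>det (matrix g)\<bar> * integral S (H \<circ> g)"
    using H1g by (simp add: H1_def o_def set_lebesgue_integral_eq_integral(1) flip: integral_component_eq_cart)
  finally show ?thesis .
qed

definition cart_of_pair :: "real \<times> real \<Rightarrow> real^2" where
  "cart_of_pair p = vector [fst p, snd p]"

definition pair_of_cart :: "real^2 \<Rightarrow> real \<times> real" where
  "pair_of_cart y = (y$1, y$2)"

lemma cart_of_pair_inverse [simp]: "pair_of_cart (cart_of_pair p) = p"
  by (simp add: cart_of_pair_def pair_of_cart_def)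

lemma pair_of_cart_inverse [simp]: "cart_of_pair (pair_of_cart y) = y"
  by (simp add: cart_of_pair_def pair_of_cart_def vec_eq_iff forall_2)

lemma cbox_cart_iff: "y \<in> cbox (cart_of_pair u) (cart_of_pair v) \<longleftrightarrow> pair_of_cart y \<in> cbox u v"
  by (cases u; cases v)
     (simp add: mem_box_cart forall_2 cbox_Pair_iff cart_of_pair_def pair_of_cart_def)

lemma cart_of_pair_image_cbox: "cart_of_pair ` cbox u v = cbox (cart_of_pair u) (cart_of_pair v)"
proof
  show "cart_of_pair ` cbox u v \<subseteq> cbox (cart_of_pair u) (cart_of_pair v)"
    by (auto simp: cbox_cart_iff)
  show "cbox (cart_of_pair u) (cart_of_pair v) \<subseteq> cart_of_pair ` cbox u v"
  proof
    fix y assume "y \<in> cbox (cart_of_pair u) (cart_of_pair v)"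
    then have "pair_of_cart y \<in> cbox u v"
      by (simp add: cbox_cart_iff)
    then show "y \<in> cart_of_pair ` cbox u v"
      by (metis image_eqI pair_of_cart_inverse)
  qed
qed

lemma pair_of_cart_image_cbox: "pair_of_cart ` cbox u v = cbox (pair_of_cart u) (pair_of_cart v)"
proof -
  have "cbox u v = cart_of_pair ` cbox (pair_of_cart u) (pair_of_cart v)"
    by (simp add: cart_of_pair_image_cbox)
  then show ?thesis
    by (simp add: image_image)
qed

lemma measure_pair_of_cart_image_cbox:
  "measure lborel (pair_of_cart ` cbox u v) = measure lborel (cbox u v)"
proof (cases "cbox u v = {}")
  case False
  then have "u$1 \<le> v$1" "u$2 \<le> v$2"
    by (auto simp: box_ne_empty cart_eq_inner_axis)
  then show ?thesis
    using False unfolding pair_of_cart_image_cbox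
    by (simp add: pair_of_cart_def content_cbox_cart content_Pair UNIV_2)
qed (simp add: pair_of_cart_image_cbox)

lemma integral_pair_of_cart:
  assumes "F integrable_on cbox u v"
  shows "integral (cbox (cart_of_pair u) (cart_of_pair v)) (\<lambda>y. F (pair_of_cart y)) = integral (cbox u v) F"
proof -
  have "((\<lambda>y. F (pair_of_cart y)) has_integral (1 / 1) *\<^sub>R integral (cbox u v) F)
      (cart_of_pair ` cbox u v)"
  proof (rule has_integral_twiddle)
    show "\<And>x. continuous (at x) pair_of_cart"
      unfolding pair_of_cart_def by (intro continuous_intros)
    show "\<exists>w z. pair_of_cart ` cbox a b = cbox w z" for a b
      using pair_of_cart_image_cbox[of a b] by blast
    show "\<exists>w z. cart_of_pair ` cbox a b = cbox w z" for a b
      using cart_of_pair_image_cbox[of a b] by blast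
    show "\<And>a b. measure lborel (pair_of_cart ` cbox a b) = 1 * measure lborel (cbox a b)"
      by (simp add: measure_pair_of_cart_image_cbox)
  qed (simp_all add: assms integrable_integral)
  then show ?thesis
    by (simp add: cart_of_pair_image_cbox integral_unique)
qed

definition torus_coords :: "real^2 \<Rightarrow> real \<times> real" where
  "torus_coords x = (kv1 \<bullet> x, kv2 \<bullet> x)"

definition point_of_coords :: "real^2 \<Rightarrow> real^2" where
  "point_of_coords y = vector [y$1, (y$1 + 2 * y$2) / sqrt 3]"

lemma kv_inner:
  "kv1 \<bullet> x = x$1" "kv2 \<bullet> x = - x$1 / 2 + sqrt 3 / 2 * x$2" "kv3 \<bullet> x = - x$1 / 2 - sqrt 3 / 2 * x$2"
  by (simp_all add: kv1_def kv2_def kv3_def inner_vec_def sum_2)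

lemma sqrt_3_mult_sqrt_3: "sqrt 3 * (sqrt 3 * x) = 3 * x"
  by (simp flip: mult.assoc)

lemma torus_coords_point_of_coords: "torus_coords (point_of_coords y) = pair_of_cart y"
  by (simp add: torus_coords_def point_of_coords_def pair_of_cart_def kv_inner field_simps
      sqrt_3_mult_sqrt_3)

lemma point_of_coords_torus_coords: "point_of_coords (cart_of_pair (torus_coords x)) = x"
  by (simp add: torus_coords_def point_of_coords_def cart_of_pair_def kv_inner vec_eq_iff forall_2
      field_simps)

lemma linear_point_of_coords: "linear point_of_coords"
  by (rule linearI) (simp_all add: point_of_coords_def vec_eq_iff forall_2 field_simps sqrt_3_mult_sqrt_3)

lemma det_point_of_coords: "det (matrix point_of_coords) = 2 / sqrt 3"
  by (simp add: det_2 matrix_def point_of_coords_def axis_def field_simps)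

lemma cell_eq_image: "cell = point_of_coords ` cbox (cart_of_pair (0, 0)) (cart_of_pair (2*pi, 2*pi))"
proof -
  have mem: "x \<in> cell \<longleftrightarrow> torus_coords x \<in> period_square" for x
    by (simp add: cell_def torus_coords_def period_square_def)
  have "cell = point_of_coords ` cart_of_pair ` period_square"
  proof (rule set_eqI, rule iffI)
    fix x assume "x \<in> cell"
    then show "x \<in> point_of_coords ` cart_of_pair ` period_square"
      using mem point_of_coords_torus_coords by (metis image_eqI)
  next
    fix x assume "x \<in> point_of_coords ` cart_of_pair ` period_square"
    then show "x \<in> cell"
      using mem torus_coords_point_of_coords by auto
  qed
  then show ?thesis
    by (simp add: period_square_def cart_of_pair_image_cbox)
qed

lemma integral_cell:
  fixes G :: "real^2 \<Rightarrow> real"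
  assumes "continuous_on UNIV G"
  shows "integral cell G
    = 2 / sqrt 3 * integral (cbox (cart_of_pair (0, 0)) (cart_of_pair (2*pi, 2*pi))) (\<lambda>y. G (point_of_coords y))"
proof -
  have "continuous_on UNIV point_of_coords"
    using linear_linear linear_continuous_on linear_point_of_coords by blast
  then have "(G \<circ> point_of_coords) absolutely_integrable_on
      cbox (cart_of_pair (0, 0)) (cart_of_pair (2*pi, 2*pi))"
    using assms by (intro absolutely_integrable_continuous continuous_on_compose)
      (auto intro: continuous_on_subset)
  then show ?thesis
    unfolding cell_eq_image
    by (simp add: integral_linear_image_real[OF linear_point_of_coords] det_point_of_coords o_def)
qed

lemma measure_cell: "measure lebesgue cell = 2 / sqrt 3 * (4 * pi^2)"
proof -
  have "cell \<in> lmeasurable"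
    unfolding cell_eq_image by (rule measurable_linear_image_interval[OF linear_point_of_coords])
  then have "measure lebesgue cell = integral cell (\<lambda>x. 1)"
    by (rule lmeasure_integral)
  also have "\<dots> = 2 / sqrt 3 * integral period_square (\<lambda>p. 1)"
    unfolding period_square_def
    by (simp only: integral_cell[OF continuous_on_const] integral_pair_of_cart[OF integrable_const])
  finally show ?thesis
    by (simp add: integral_period_square_const)
qed

lemma haar_avg_torus_coords:
  assumes F: "continuous_on UNIV F"
  shows "haar_avg (\<lambda>x. F (torus_coords x)) = torus_avg F"
proof -
  have "continuous_on UNIV (\<lambda>x. F (torus_coords x))"
    unfolding torus_coords_def by (intro continuous_on_compose2[OF F] continuous_intros) auto
  then have "integral cell (\<lambda>x. F (torus_coords x)) = 2 / sqrt 3 * integral period_square F"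
    using integral_pair_of_cart[OF integrable_on_period_square[OF F, unfolded period_square_def]]
    by (simp add: integral_cell torus_coords_point_of_coords period_square_def)
  then show ?thesis
    by (simp add: haar_avg_def torus_avg_def measure_cell)
qed

section \<open>The potential and the curvature profiles on the torus\<close>

text \<open>In the coordinates \<open>(a, b) = torus_coords x\<close> we have \<open>k\<^sub>3 \<bullet> x = -(a + b)\<close>.
  Since \<open>k\<^sub>m \<bullet> k\<^sub>m = 1\<close> and \<open>k\<^sub>m \<bullet> k\<^sub>n = -1/2\<close> for \<open>m \<noteq> n\<close>,
  the traces of the powers of \<open>H = \<epsilon> \<Sum>\<^sub>m k\<^sub>m k\<^sub>m\<^sup>T cos (k\<^sub>m \<bullet> x)\<close>
  and \<open>|\<nabla>H|\<^sup>2\<close> are powers of \<open>\<epsilon>\<close> times the following polynomials in the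
  cosines and sines of \<open>a\<close>, \<open>b\<close> and \<open>a + b\<close>.\<close>

fun phi_torus :: "real \<times> real \<Rightarrow> real" where
  "phi_torus (a, b) = cos a + cos b + cos (a + b)"

fun trH2_torus :: "real \<times> real \<Rightarrow> real" where
  "trH2_torus (a, b) = cos a ^ 2 + cos b ^ 2 + cos (a + b) ^ 2
     + (cos a * cos b + cos a * cos (a + b) + cos b * cos (a + b)) / 2"

fun trH3_torus :: "real \<times> real \<Rightarrow> real" where
  "trH3_torus (a, b) = cos a ^ 3 + cos b ^ 3 + cos (a + b) ^ 3
     + 3/4 * (cos a ^ 2 * (cos b + cos (a + b)) + cos b ^ 2 * (cos a + cos (a + b))
              + cos (a + b) ^ 2 * (cos a + cos b))
     - 3/4 * cos a * cos b * cos (a + b)"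

fun gradH_sq_torus :: "real \<times> real \<Rightarrow> real" where
  "gradH_sq_torus (a, b) = sin a ^ 2 + sin b ^ 2 + sin (a + b) ^ 2
     - (sin a * sin b - sin a * sin (a + b) - sin b * sin (a + b)) / 4"

lemma kv3_inner_eq: "kv3 \<bullet> x = - (kv1 \<bullet> x + kv2 \<bullet> x)"
  by (simp add: kv_inner)

lemma cos_sin_kv3:
  "cos (kv3 \<bullet> x) = cos (kv1 \<bullet> x + kv2 \<bullet> x)" "sin (kv3 \<bullet> x) = - sin (kv1 \<bullet> x + kv2 \<bullet> x)"
  by (simp_all only: kv3_inner_eq cos_minus sin_minus)

lemma phi_eq_phi_torus: "phi x = phi_torus (torus_coords x)"
  by (simp add: phi_def torus_coords_def cos_sin_kv3)

definition cos_fst_terms :: "trig_term list" where "cos_fst_terms = [(1, 1, 0, 0, 0)]"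
definition cos_snd_terms :: "trig_term list" where "cos_snd_terms = [(1, 0, 0, 1, 0)]"
definition cos_sum_terms :: "trig_term list" where "cos_sum_terms = [(1, 1, 0, 1, 0), (-1, 0, 1, 0, 1)]"
definition sin_fst_terms :: "trig_term list" where "sin_fst_terms = [(1, 0, 1, 0, 0)]"
definition sin_snd_terms :: "trig_term list" where "sin_snd_terms = [(1, 0, 0, 0, 1)]"
definition sin_sum_terms :: "trig_term list" where "sin_sum_terms = [(1, 0, 1, 1, 0), (1, 1, 0, 0, 1)]"

lemma trig_eval_basic:
  "trig_eval cos_fst_terms (a, b) = cos a" "trig_eval cos_snd_terms (a, b) = cos b"
  "trig_eval cos_sum_terms (a, b) = cos (a + b)" "trig_eval sin_fst_terms (a, b) = sin a"
  "trig_eval sin_snd_terms (a, b) = sin b" "trig_eval sin_sum_terms (a, b) = sin (a + b)"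
  by (simp_all add: cos_fst_terms_def cos_snd_terms_def cos_sum_terms_def sin_fst_terms_def
      sin_snd_terms_def sin_sum_terms_def cos_sin_power_def cos_add sin_add)

definition phi_terms :: "trig_term list" where
  "phi_terms = cos_fst_terms @ cos_snd_terms @ cos_sum_terms"

definition trH2_terms :: "trig_term list" where
  "trH2_terms = trig_mult cos_fst_terms cos_fst_terms @ trig_mult cos_snd_terms cos_snd_terms
     @ trig_mult cos_sum_terms cos_sum_terms
     @ trig_scale (1/2) (trig_mult cos_fst_terms cos_snd_terms @ trig_mult cos_fst_terms cos_sum_terms
                         @ trig_mult cos_snd_terms cos_sum_terms)"

definition trH3_terms :: "trig_term list" where
  "trH3_terms =
     trig_mult cos_fst_terms (trig_mult cos_fst_terms cos_fst_terms)
     @ trig_mult cos_snd_terms (trig_mult cos_snd_terms cos_snd_terms)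
     @ trig_mult cos_sum_terms (trig_mult cos_sum_terms cos_sum_terms)
     @ trig_scale (3/4)
        (trig_mult (trig_mult cos_fst_terms cos_fst_terms) (cos_snd_terms @ cos_sum_terms)
         @ trig_mult (trig_mult cos_snd_terms cos_snd_terms) (cos_fst_terms @ cos_sum_terms)
         @ trig_mult (trig_mult cos_sum_terms cos_sum_terms) (cos_fst_terms @ cos_snd_terms))
     @ trig_scale (-3/4) (trig_mult (trig_mult cos_fst_terms cos_snd_terms) cos_sum_terms)"

definition gradH_sq_terms :: "trig_term list" where
  "gradH_sq_terms = trig_mult sin_fst_terms sin_fst_terms @ trig_mult sin_snd_terms sin_snd_terms
     @ trig_mult sin_sum_terms sin_sum_terms
     @ trig_scale (-1/4) (trig_mult sin_fst_terms sin_snd_terms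
                          @ trig_scale (-1) (trig_mult sin_fst_terms sin_sum_terms
                                             @ trig_mult sin_snd_terms sin_sum_terms))"

lemmas trig_eval_simps = trig_eval_append trig_eval_scale trig_eval_mult trig_eval_basic

lemma torus_profiles_trig:
  "phi_torus = trig_eval phi_terms" "trH2_torus = trig_eval trH2_terms"
  "trH3_torus = trig_eval trH3_terms" "gradH_sq_torus = trig_eval gradH_sq_terms"
  by (simp_all add: fun_eq_iff phi_terms_def trH2_terms_def trH3_terms_def gradH_sq_terms_def
      trig_eval_simps power2_eq_square power3_eq_cube field_simps)

lemma continuous_on_torus_profiles [continuous_intros]:
  "continuous_on S phi_torus" "continuous_on S trH2_torus"
  "continuous_on S trH3_torus" "continuous_on S gradH_sq_torus"
  unfolding torus_profiles_trig by (rule continuous_on_trig_eval)+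

lemmas trig_term_defs = phi_terms_def trH2_terms_def trH3_terms_def gradH_sq_terms_def
  cos_fst_terms_def cos_snd_terms_def cos_sum_terms_def sin_fst_terms_def sin_snd_terms_def
  sin_sum_terms_def trig_mult_def trig_scale_def

lemmas cos_sin_moments = cos_sin_moments_low cos_sin_moments_quadratic cos_sin_moments_cubic
text \<open>Evaluating \<open>trig_mult\<close> leaves the exponents in \<open>Suc\<close> form, so the moments are
  needed in that form as well.\<close>

lemmas cos_sin_moments_Suc = cos_sin_moments[unfolded numeral_3_eq_3 numeral_2_eq_2 One_nat_def]

lemma torus_avg_phi_torus_powers:
  "torus_avg phi_torus = 0"
  "torus_avg (\<lambda>p. phi_torus p * phi_torus p) = 3/2"
  "torus_avg (\<lambda>p. phi_torus p * (phi_torus p)\<^sup>2) = 3/2"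
  unfolding torus_profiles_trig power2_eq_square trig_eval_mult[symmetric] torus_avg_trig_eval
  by (simp_all add: trig_term_defs eval_nat_numeral cos_sin_moments_Suc)

lemma torus_avg_trH2_torus:
  "torus_avg trH2_torus = 3/2" "torus_avg (\<lambda>p. trH2_torus p * phi_torus p) = 3/8"
  unfolding torus_profiles_trig trig_eval_mult[symmetric] torus_avg_trig_eval
  by (simp_all add: trig_term_defs eval_nat_numeral cos_sin_moments_Suc)

lemma torus_avg_gradH_sq_torus:
  "torus_avg gradH_sq_torus = 3/2" "torus_avg (\<lambda>p. gradH_sq_torus p * phi_torus p) = 3/16"
  unfolding torus_profiles_trig trig_eval_mult[symmetric] torus_avg_trig_eval
  by (simp_all add: trig_term_defs eval_nat_numeral cos_sin_moments_Suc)

lemma torus_avg_trH3_torus: "torus_avg trH3_torus = -3/16"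
  unfolding torus_profiles_trig torus_avg_trig_eval
  by (simp add: trig_term_defs eval_nat_numeral cos_sin_moments_Suc)

lemma abs_phi_torus_le: "\<bar>phi_torus p\<bar> \<le> 3"
proof (cases p)
  case (Pair a b)
  show ?thesis
    unfolding Pair phi_torus.simps abs_le_iff
    using cos_le_one[of a] cos_le_one[of b] cos_le_one[of "a + b"]
      cos_ge_minus_one[of a] cos_ge_minus_one[of b] cos_ge_minus_one[of "a + b"]
    by linarith
qed

lemma Zeps_eq_torus_avg: "Zeps e = torus_avg (\<lambda>p. exp (e * phi_torus p))"
  unfolding Zeps_def phi_eq_phi_torus
  by (rule haar_avg_torus_coords[where F="\<lambda>p. exp (e * phi_torus p)"]) (intro continuous_intros)

lemma Zeps_lower_bound: "exp (- 3 * \<bar>e\<bar>) \<le> Zeps e"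
  unfolding Zeps_eq_torus_avg
proof (rule torus_avg_ge)
  show "continuous_on UNIV (\<lambda>p. exp (e * phi_torus p))"
    by (intro continuous_intros)
  fix p
  have "\<bar>e * phi_torus p\<bar> \<le> \<bar>e\<bar> * 3"
    unfolding abs_mult by (intro mult_left_mono abs_phi_torus_le) simp
  then show "exp (- 3 * \<bar>e\<bar>) \<le> exp (e * phi_torus p)"
    by simp
qed

lemma Zeps_pos: "0 < Zeps e"
  using Zeps_lower_bound[of e] by (meson exp_gt_zero less_le_trans)

section \<open>Derivatives of the Gibbs density\<close>

lemma feps_eq: "feps e x = exp (e * phi_torus (torus_coords x)) / Zeps e"
  by (simp add: feps_def phi_eq_phi_torus)

text \<open>Functions of the form \<open>c + \<Sum>m. a m cos (k m \<bullet> y) + b m sin (k m \<bullet> y)\<close> are closed under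
  \<open>pd\<close>; the right-hand side keeps this shape (with \<open>c = 0\<close>) so that the lemma can be iterated,
  which is also why zero coefficients appear below.\<close>

lemma pd_trig_sum:
  "pd i (\<lambda>y. c + (\<Sum>m\<in>J. a m * cos (k m \<bullet> y) + b m * sin (k m \<bullet> y)))
     = (\<lambda>y. 0 + (\<Sum>m\<in>J. (b m * k m $ i) * cos (k m \<bullet> y) + (- a m * k m $ i) * sin (k m \<bullet> y)))"
proof
  fix x
  have shift: "k m \<bullet> (x + t *\<^sub>R axis i 1) = k m \<bullet> x + t * k m $ i" for m t
    by (simp add: inner_add_right inner_axis)
  have "((\<lambda>t. c + (\<Sum>m\<in>J. a m * cos (k m \<bullet> x + t * k m $ i) + b m * sin (k m \<bullet> x + t * k m $ i)))
      has_real_derivative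
        (\<Sum>m\<in>J. (b m * k m $ i) * cos (k m \<bullet> x) + (- a m * k m $ i) * sin (k m \<bullet> x))) (at 0)"
    by (auto intro!: derivative_eq_intros sum.cong simp: algebra_simps)
  then show "pd i (\<lambda>y. c + (\<Sum>m\<in>J. a m * cos (k m \<bullet> y) + b m * sin (k m \<bullet> y))) x
      = 0 + (\<Sum>m\<in>J. (b m * k m $ i) * cos (k m \<bullet> x) + (- a m * k m $ i) * sin (k m \<bullet> x))"
    unfolding pd_def shift by (simp add: DERIV_imp_deriv)
qed

definition wave :: "3 \<Rightarrow> real^2" where
  "wave m = (vector [kv1, kv2, kv3] :: (real^2)^3) $ m"

lemma wave_simps [simp]: "wave 1 = kv1" "wave 2 = kv2" "wave 3 = kv3"
  by (simp_all add: wave_def)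

lemma kv_components [simp]:
  "kv1 $ 1 = 1" "kv1 $ 2 = 0" "kv2 $ 1 = - 1 / 2" "kv2 $ 2 = sqrt 3 / 2"
  "kv3 $ 1 = - 1 / 2" "kv3 $ 2 = - sqrt 3 / 2"
  by (simp_all add: kv1_def kv2_def kv3_def)

lemma ln_feps:
  "(\<lambda>y. ln (feps e y)) = (\<lambda>y. - ln (Zeps e) + (\<Sum>m\<in>UNIV. e * cos (wave m \<bullet> y) + 0 * sin (wave m \<bullet> y)))"
  using Zeps_pos[of e] by (auto simp: feps_def ln_div phi_def sum_3 algebra_simps)

lemma Hf_feps:
  "Hf (feps e) i j
     = (\<lambda>y. 0 + (\<Sum>m\<in>UNIV. (e * wave m $ i * wave m $ j) * cos (wave m \<bullet> y) + 0 * sin (wave m \<bullet> y)))"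
  unfolding Hf_def[abs_def] ln_feps pd_trig_sum by (simp add: algebra_simps sum_negf)

lemma pd_Hf_feps:
  "pd k (Hf (feps e) i j) x = - e * (\<Sum>m\<in>UNIV. wave m $ i * wave m $ j * wave m $ k * sin (wave m \<bullet> x))"
  unfolding Hf_feps pd_trig_sum by (simp add: sum_distrib_left algebra_simps)

lemma trH_feps: "trH (feps e) x = e * phi_torus (torus_coords x)"
  by (simp add: trH_def Hf_feps sum_2 sum_3 torus_coords_def cos_sin_kv3 field_simps
      sqrt_3_mult_sqrt_3)

lemma trH2_feps: "trH2 (feps e) x = e^2 * trH2_torus (torus_coords x)"
  by (simp add: trH2_def Hf_feps sum_2 sum_3 torus_coords_def cos_sin_kv3 field_simps
      power2_eq_square sqrt_3_mult_sqrt_3)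

lemma trH3_feps: "trH3 (feps e) x = e^3 * trH3_torus (torus_coords x)"
  by (simp add: trH3_def Hf_feps sum_2 sum_3 torus_coords_def cos_sin_kv3 field_simps
      power2_eq_square power3_eq_cube sqrt_3_mult_sqrt_3)

lemma gradH_sq_feps: "gradH_sq (feps e) x = e^2 * gradH_sq_torus (torus_coords x)"
  by (simp add: gradH_sq_def pd_Hf_feps sum_2 sum_3 torus_coords_def cos_sin_kv3 field_simps
      power2_eq_square sqrt_3_mult_sqrt_3)

section \<open>Tilted averages\<close>

lemma exp_taylor_remainder:
  fixes x :: real
  shows "\<bar>exp x - (\<Sum>m<n. x ^ m / fact m)\<bar> \<le> exp \<bar>x\<bar> / fact n * \<bar>x\<bar> ^ n"
proof -
  obtain t where t: "\<bar>t\<bar> \<le> \<bar>x\<bar>" "exp x = (\<Sum>m<n. x ^ m / fact m) + exp t / fact n * x ^ n"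
    using Maclaurin_exp_le[of x n] by blast
  have "exp t \<le> exp \<bar>x\<bar>"
    using t(1) by simp
  then show ?thesis
    using t(2) by (simp add: abs_mult power_abs divide_right_mono mult_right_mono)
qed

lemma exp_taylor_remainder_scaled:
  fixes e v K :: real
  assumes "\<bar>v\<bar> \<le> K" "\<bar>e\<bar> \<le> 1"
  shows "\<bar>exp (e * v) - (\<Sum>m<n. (e * v) ^ m / fact m)\<bar> \<le> exp K / fact n * K ^ n * \<bar>e\<bar> ^ n"
proof -
  have ev: "\<bar>e * v\<bar> \<le> \<bar>e\<bar> * K" "\<bar>e\<bar> * K \<le> K"
    using assms abs_ge_zero[of v] by (simp_all add: abs_mult mult_left_mono mult_left_le_one_le)
  have "\<bar>exp (e * v) - (\<Sum>m<n. (e * v) ^ m / fact m)\<bar> \<le> exp \<bar>e * v\<bar> / fact n * \<bar>e * v\<bar> ^ n"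
    by (rule exp_taylor_remainder)
  also have "\<dots> \<le> exp K / fact n * (\<bar>e\<bar> * K) ^ n"
    using ev by (intro mult_mono divide_right_mono power_mono) auto
  finally show ?thesis
    by (simp add: power_mult_distrib mult_ac)
qed

lemma bounded_on_period_square:
  assumes "continuous_on UNIV (F :: real \<times> real \<Rightarrow> real)"
  obtains B where "\<And>p. p \<in> period_square \<Longrightarrow> \<bar>F p\<bar> \<le> B"
proof -
  have "compact (F ` period_square)"
    unfolding period_square_def
    by (intro compact_continuous_image continuous_on_subset[OF assms]) auto
  then obtain B where "\<forall>y \<in> F ` period_square. norm y \<le> B"
    using compact_imp_bounded bounded_iff by metis
  then show ?thesis
    using that by auto
qed

lemma torus_avg_exp_minus_taylor_poly:
  fixes P V :: "real \<times> real \<Rightarrow> real"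
  assumes P: "continuous_on UNIV P" and V: "continuous_on UNIV V"
  shows "torus_avg (\<lambda>p. P p * exp (e * V p)) - (\<Sum>m<n. e ^ m / fact m * torus_avg (\<lambda>p. P p * V p ^ m))
    = torus_avg (\<lambda>p. P p * (exp (e * V p) - (\<Sum>m<n. (e * V p) ^ m / fact m)))"
proof -
  have "torus_avg (\<lambda>p. P p * (exp (e * V p) - (\<Sum>m<n. (e * V p) ^ m / fact m)))
      = torus_avg (\<lambda>p. P p * exp (e * V p)) - torus_avg (\<lambda>p. \<Sum>m<n. e ^ m / fact m * (P p * V p ^ m))"
    by (subst torus_avg_diff[symmetric])
       (auto intro!: continuous_intros P V arg_cong[where f=torus_avg]
             simp: sum_distrib_left power_mult_distrib algebra_simps)
  also have "torus_avg (\<lambda>p. \<Sum>m<n. e ^ m / fact m * (P p * V p ^ m))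
      = (\<Sum>m<n. torus_avg (\<lambda>p. e ^ m / fact m * (P p * V p ^ m)))"
    by (rule torus_avg_sum) (auto intro!: continuous_intros P V)
  also have "\<dots> = (\<Sum>m<n. e ^ m / fact m * torus_avg (\<lambda>p. P p * V p ^ m))"
    by (simp only: torus_avg_cmult)
  finally show ?thesis ..
qed

lemma torus_avg_exp_taylor:
  fixes P V :: "real \<times> real \<Rightarrow> real"
  assumes P: "continuous_on UNIV P" and V: "continuous_on UNIV V"
  shows "(\<lambda>e. torus_avg (\<lambda>p. P p * exp (e * V p))
            - (\<Sum>m<n. e ^ m / fact m * torus_avg (\<lambda>p. P p * V p ^ m))) \<in> O[at 0](\<lambda>e. e ^ n)"
proof -
  obtain B where B: "\<And>p. p \<in> period_square \<Longrightarrow> \<bar>P p\<bar> \<le> B"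
    using bounded_on_period_square[OF P] by blast
  obtain K where K: "\<And>p. p \<in> period_square \<Longrightarrow> \<bar>V p\<bar> \<le> K"
    using bounded_on_period_square[OF V] by blast
  define R where "R e p = P p * (exp (e * V p) - (\<Sum>m<n. (e * V p) ^ m / fact m))" for e p
  have "\<bar>torus_avg (R e)\<bar> \<le> B * (exp K / fact n * K ^ n) * \<bar>e\<bar> ^ n" if "\<bar>e\<bar> \<le> 1" for e
  proof (rule torus_avg_abs_le)
    show "continuous_on UNIV (R e)"
      unfolding R_def by (auto intro!: continuous_intros P V)
    fix p assume p: "p \<in> period_square"
    have "\<bar>exp (e * V p) - (\<Sum>m<n. (e * V p) ^ m / fact m)\<bar> \<le> exp K / fact n * K ^ n * \<bar>e\<bar> ^ n"
      by (rule exp_taylor_remainder_scaled[OF K[OF p] that])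
    then show "\<bar>R e p\<bar> \<le> B * (exp K / fact n * K ^ n) * \<bar>e\<bar> ^ n"
      unfolding R_def abs_mult mult.assoc[of B] using B[OF p]
      by (intro mult_mono) auto
  qed
  then have "\<forall>\<^sub>F e in at 0. norm (torus_avg (R e)) \<le> B * (exp K / fact n * K ^ n) * norm (e ^ n)"
    unfolding eventually_at by (intro exI[of _ 1]) (auto simp: dist_real_def power_abs)
  then show ?thesis
    unfolding torus_avg_exp_minus_taylor_poly[OF P V] R_def by (rule bigoI)
qed

definition tilted_avg :: "(real \<times> real \<Rightarrow> real) \<Rightarrow> real \<Rightarrow> real" where
  "tilted_avg P e = torus_avg (\<lambda>p. P p * exp (e * phi_torus p))"

lemma tilted_avg_taylor:
  assumes "continuous_on UNIV P"
  shows "(\<lambda>e. tilted_avg P e - (\<Sum>m<n. e ^ m / fact m * torus_avg (\<lambda>p. P p * phi_torus p ^ m)))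
           \<in> O[at 0](\<lambda>e. e ^ n)"
  unfolding tilted_avg_def by (rule torus_avg_exp_taylor[OF assms continuous_on_torus_profiles(1)])

lemma tilted_avg_cmult: "tilted_avg (\<lambda>p. c * P p) e = c * tilted_avg P e"
  by (simp add: tilted_avg_def mult.assoc torus_avg_cmult)

lemma tilted_avg_add:
  "continuous_on UNIV P \<Longrightarrow> continuous_on UNIV Q \<Longrightarrow>
    tilted_avg (\<lambda>p. P p + Q p) e = tilted_avg P e + tilted_avg Q e"
  unfolding tilted_avg_def distrib_right by (intro torus_avg_add continuous_intros)

lemma haar_avg_feps:
  assumes "continuous_on UNIV P"
  shows "haar_avg (\<lambda>x. P (torus_coords x) * feps e x) = tilted_avg P e / Zeps e"
proof -
  define F where "F = (\<lambda>p. P p * exp (e * phi_torus p) / Zeps e)"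
  have "continuous_on UNIV F"
    unfolding F_def using Zeps_pos[of e] by (auto intro!: continuous_intros assms)
  then have "haar_avg (\<lambda>x. F (torus_coords x)) = torus_avg F"
    by (rule haar_avg_torus_coords)
  moreover have "(\<lambda>x. F (torus_coords x)) = (\<lambda>x. P (torus_coords x) * feps e x)"
    by (simp add: F_def feps_eq)
  ultimately show ?thesis
    by (simp add: F_def torus_avg_divide tilted_avg_def)
qed

lemma Zeps_eq_tilted_avg: "Zeps e = tilted_avg (\<lambda>_. 1) e"
  by (simp add: Zeps_eq_torus_avg tilted_avg_def)

lemma Ifun_feps: "Ifun (feps e) = e * tilted_avg phi_torus e / Zeps e"
  using haar_avg_feps[of "\<lambda>p. e * phi_torus p" e]
  by (simp add: Ifun_def trH_feps continuous_intros tilted_avg_cmult)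

lemma Qfun_feps: "Qfun (feps e) = e^2 * tilted_avg trH2_torus e / Zeps e"
  using haar_avg_feps[of "\<lambda>p. e^2 * trH2_torus p" e]
  by (simp add: Qfun_def trH2_feps continuous_intros tilted_avg_cmult)

lemma Dfun_feps:
  "Dfun (feps e) = (e^2 * tilted_avg gradH_sq_torus e + 2 * e^3 * tilted_avg trH3_torus e) / Zeps e"
  using haar_avg_feps[of "\<lambda>p. e^2 * gradH_sq_torus p + 2 * e^3 * trH3_torus p" e]
  by (simp add: Dfun_def gradH_sq_feps trH3_feps continuous_intros tilted_avg_cmult tilted_avg_add
      mult.assoc)

section \<open>Asymptotic expansions\<close>

lemma bigo_power_mult:
  fixes f g :: "real \<Rightarrow> real"
  assumes "f \<in> O[F](\<lambda>x. x ^ m)" "g \<in> O[F](\<lambda>x. x ^ n)"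
  shows "(\<lambda>x. f x * g x) \<in> O[F](\<lambda>x. x ^ (m + n))"
  using landau_o.big.mult[OF assms] by (simp add: power_add)

lemma bigo_quotient_expansion:
  fixes N Z p h :: "'a \<Rightarrow> real"
  assumes "(\<lambda>x. N x - p x) \<in> O[F](h)" "(\<lambda>x. p x * (Z x - 1)) \<in> O[F](h)"
    and "(\<lambda>x. 1 / Z x) \<in> O[F](\<lambda>_. 1)" "\<And>x. Z x \<noteq> 0"
  shows "(\<lambda>x. N x / Z x - p x) \<in> O[F](h)"
proof -
  have "(\<lambda>x. N x - p x - p x * (Z x - 1)) \<in> O[F](h)"
    using assms(1,2) by (rule sum_in_bigo(2))
  then have "(\<lambda>x. (N x - p x - p x * (Z x - 1)) * (1 / Z x)) \<in> O[F](h)"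
    using assms(3) by (rule landau_o.big_1_mult)
  moreover have "(N x - p x - p x * (Z x - 1)) * (1 / Z x) = N x / Z x - p x" for x
    using assms(4)[of x] by (simp add: field_simps)
  ultimately show ?thesis
    by simp
qed

lemma bigo_product_expansion:
  fixes f g p q h k :: "'a \<Rightarrow> real"
  assumes f: "(\<lambda>x. f x - p x) \<in> O[F](h)" and g: "(\<lambda>x. g x - q x) \<in> O[F](h)"
    and "p \<in> O[F](k)" "q \<in> O[F](k)" "h \<in> O[F](k)"
  shows "(\<lambda>x. f x * g x - p x * q x) \<in> O[F](\<lambda>x. h x * k x)"
proof -
  have "(\<lambda>x. (f x - p x) * (g x - q x)) \<in> O[F](\<lambda>x. h x * k x)"
    by (rule landau_o.big.mult[OF f landau_o.big.trans[OF g assms(5)]])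
  moreover have "(\<lambda>x. (f x - p x) * q x) \<in> O[F](\<lambda>x. h x * k x)"
    by (rule landau_o.big.mult[OF f assms(4)])
  moreover have "(\<lambda>x. (g x - q x) * p x) \<in> O[F](\<lambda>x. h x * k x)"
    by (rule landau_o.big.mult[OF g assms(3)])
  ultimately have "(\<lambda>x. (f x - p x) * (g x - q x) + (f x - p x) * q x + (g x - q x) * p x)
      \<in> O[F](\<lambda>x. h x * k x)"
    by (intro sum_in_bigo(1))
  moreover have "(f x - p x) * (g x - q x) + (f x - p x) * q x + (g x - q x) * p x
      = f x * g x - p x * q x" for x
    by (simp add: algebra_simps)
  ultimately show ?thesis
    by simp
qed

lemma Zeps_expansion: "(\<lambda>e. Zeps e - 1) \<in> O[at 0](\<lambda>e. e^2)"
  using tilted_avg_taylor[of "\<lambda>_. 1" 2]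
  by (simp add: Zeps_eq_tilted_avg torus_avg_const torus_avg_phi_torus_powers lessThan_nat_numeral)

lemma tilted_avg_phi_torus_expansion:
  "(\<lambda>e. tilted_avg phi_torus e - (3/2 * e + 3/4 * e^2)) \<in> O[at 0](\<lambda>e. e^3)"
  using tilted_avg_taylor[OF continuous_on_torus_profiles(1), of 3]
  by (simp add: torus_avg_phi_torus_powers lessThan_nat_numeral fact_numeral) (simp add: algebra_simps)

lemma tilted_avg_trH2_torus_expansion:
  "(\<lambda>e. tilted_avg trH2_torus e - (3/2 + 3/8 * e)) \<in> O[at 0](\<lambda>e. e^2)"
  using tilted_avg_taylor[OF continuous_on_torus_profiles(2), of 2]
  by (simp add: torus_avg_trH2_torus lessThan_nat_numeral) (simp add: algebra_simps)

lemma tilted_avg_gradH_sq_torus_expansion: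
  "(\<lambda>e. tilted_avg gradH_sq_torus e - (3/2 + 3/16 * e)) \<in> O[at 0](\<lambda>e. e^2)"
  using tilted_avg_taylor[OF continuous_on_torus_profiles(4), of 2]
  by (simp add: torus_avg_gradH_sq_torus lessThan_nat_numeral) (simp add: algebra_simps)

lemma tilted_avg_trH3_torus_expansion:
  "(\<lambda>e. tilted_avg trH3_torus e - (-3/16)) \<in> O[at 0](\<lambda>e. e^1)"
  using tilted_avg_taylor[OF continuous_on_torus_profiles(3), of 1]
  by (simp add: torus_avg_trH3_torus)

lemma inverse_Zeps_bigo: "(\<lambda>e. 1 / Zeps e) \<in> O[at 0](\<lambda>_. 1)"
proof (rule bigoI)
  have "\<bar>1 / Zeps e\<bar> \<le> exp 3" if "\<bar>e\<bar> < 1" for e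
  proof -
    have "exp (- 3) \<le> exp (- 3 * \<bar>e\<bar>)"
      using that by simp
    also have "\<dots> \<le> Zeps e"
      by (rule Zeps_lower_bound)
    finally show ?thesis
      using Zeps_pos[of e] by (simp add: exp_minus field_simps)
  qed
  then show "\<forall>\<^sub>F e in at 0. norm (1 / Zeps e) \<le> exp 3 * norm (1 :: real)"
    unfolding eventually_at by (intro exI[of _ 1]) (auto simp: dist_real_def)
qed

lemma Ifun_feps_expansion:
  "(\<lambda>e. Ifun (feps e) - (3/2 * e^2 + 3/4 * e^3)) \<in> O[at 0](\<lambda>e. e^4)"
  unfolding Ifun_feps
proof (rule bigo_quotient_expansion[OF _ _ inverse_Zeps_bigo])
  have "(\<lambda>e. e * (tilted_avg phi_torus e - (3/2 * e + 3/4 * e^2))) \<in> O[at 0](\<lambda>e. e^(1 + 3))"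
    by (rule bigo_power_mult[OF _ tilted_avg_phi_torus_expansion]) simp
  then show "(\<lambda>e. e * tilted_avg phi_torus e - (3/2 * e^2 + 3/4 * e^3)) \<in> O[at 0](\<lambda>e. e^4)"
    by (simp add: algebra_simps power2_eq_square power3_eq_cube)
  have "(\<lambda>e::real. 3/2 * e^2 + 3/4 * e^3) \<in> O[at 0](\<lambda>e. e^2)"
    by real_asymp
  from bigo_power_mult[OF this Zeps_expansion]
  show "(\<lambda>e. (3/2 * e^2 + 3/4 * e^3) * (Zeps e - 1)) \<in> O[at 0](\<lambda>e. e^4)"
    by simp
qed (rule Zeps_pos[THEN less_imp_neq, symmetric])

lemma Qfun_feps_expansion:
  "(\<lambda>e. Qfun (feps e) - (3/2 * e^2 + 3/8 * e^3)) \<in> O[at 0](\<lambda>e. e^4)"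
  unfolding Qfun_feps
proof (rule bigo_quotient_expansion[OF _ _ inverse_Zeps_bigo])
  have "(\<lambda>e. e^2 * (tilted_avg trH2_torus e - (3/2 + 3/8 * e))) \<in> O[at 0](\<lambda>e. e^(2 + 2))"
    by (rule bigo_power_mult[OF _ tilted_avg_trH2_torus_expansion]) simp
  then show "(\<lambda>e. e^2 * tilted_avg trH2_torus e - (3/2 * e^2 + 3/8 * e^3)) \<in> O[at 0](\<lambda>e. e^4)"
    by (simp add: algebra_simps power2_eq_square power3_eq_cube)
  have "(\<lambda>e::real. 3/2 * e^2 + 3/8 * e^3) \<in> O[at 0](\<lambda>e. e^2)"
    by real_asymp
  from bigo_power_mult[OF this Zeps_expansion]
  show "(\<lambda>e. (3/2 * e^2 + 3/8 * e^3) * (Zeps e - 1)) \<in> O[at 0](\<lambda>e. e^4)"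
    by simp
qed (rule Zeps_pos[THEN less_imp_neq, symmetric])

lemma Dfun_feps_expansion:
  "(\<lambda>e. Dfun (feps e) - (3/2 * e^2 - 3/16 * e^3)) \<in> O[at 0](\<lambda>e. e^4)"
  unfolding Dfun_feps
proof (rule bigo_quotient_expansion[OF _ _ inverse_Zeps_bigo])
  have "(\<lambda>e. e^2 * (tilted_avg gradH_sq_torus e - (3/2 + 3/16 * e))) \<in> O[at 0](\<lambda>e. e^(2 + 2))"
    by (rule bigo_power_mult[OF _ tilted_avg_gradH_sq_torus_expansion]) simp
  moreover have "(\<lambda>e. 2 * e^3 * (tilted_avg trH3_torus e - (-3/16))) \<in> O[at 0](\<lambda>e. e^(3 + 1))"
    by (rule bigo_power_mult[OF _ tilted_avg_trH3_torus_expansion]) simp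
  ultimately have "(\<lambda>e. e^2 * (tilted_avg gradH_sq_torus e - (3/2 + 3/16 * e))
      + 2 * e^3 * (tilted_avg trH3_torus e - (-3/16))) \<in> O[at 0](\<lambda>e. e^4)"
    by (intro sum_in_bigo) simp_all
  then show "(\<lambda>e. e^2 * tilted_avg gradH_sq_torus e + 2 * e^3 * tilted_avg trH3_torus e
      - (3/2 * e^2 - 3/16 * e^3)) \<in> O[at 0](\<lambda>e. e^4)"
    by (simp add: algebra_simps power2_eq_square power3_eq_cube)
  have "(\<lambda>e::real. 3/2 * e^2 - 3/16 * e^3) \<in> O[at 0](\<lambda>e. e^2)"
    by real_asymp
  from bigo_power_mult[OF this Zeps_expansion]
  show "(\<lambda>e. (3/2 * e^2 - 3/16 * e^3) * (Zeps e - 1)) \<in> O[at 0](\<lambda>e. e^4)"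
    by simp
qed (rule Zeps_pos[THEN less_imp_neq, symmetric])

lemma IDQ_defect_expansion:
  "(\<lambda>e. Ifun (feps e) * Dfun (feps e) - (Qfun (feps e))^2 - (- 9/32 * e^5)) \<in> O[at 0](\<lambda>e. e^6)"
proof -
  have e4_e2: "(\<lambda>e::real. e^4) \<in> O[at 0](\<lambda>e. e^2)"
    by real_asymp
  have "(\<lambda>e. Ifun (feps e) * Dfun (feps e) - (3/2 * e^2 + 3/4 * e^3) * (3/2 * e^2 - 3/16 * e^3))
      \<in> O[at 0](\<lambda>e. e^4 * e^2)"
    by (rule bigo_product_expansion[OF Ifun_feps_expansion Dfun_feps_expansion _ _ e4_e2]) real_asymp+
  moreover have "(\<lambda>e. Qfun (feps e) * Qfun (feps e) - (3/2 * e^2 + 3/8 * e^3) * (3/2 * e^2 + 3/8 * e^3))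
      \<in> O[at 0](\<lambda>e. e^4 * e^2)"
    by (rule bigo_product_expansion[OF Qfun_feps_expansion Qfun_feps_expansion _ _ e4_e2]) real_asymp+
  moreover have "(\<lambda>e::real. (3/2 * e^2 + 3/4 * e^3) * (3/2 * e^2 - 3/16 * e^3)
      - (3/2 * e^2 + 3/8 * e^3) * (3/2 * e^2 + 3/8 * e^3) + 9/32 * e^5) \<in> O[at 0](\<lambda>e. e^4 * e^2)"
    by real_asymp
  ultimately have "(\<lambda>e. (Ifun (feps e) * Dfun (feps e) - (3/2 * e^2 + 3/4 * e^3) * (3/2 * e^2 - 3/16 * e^3))
      - (Qfun (feps e) * Qfun (feps e) - (3/2 * e^2 + 3/8 * e^3) * (3/2 * e^2 + 3/8 * e^3))
      + ((3/2 * e^2 + 3/4 * e^3) * (3/2 * e^2 - 3/16 * e^3)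
         - (3/2 * e^2 + 3/8 * e^3) * (3/2 * e^2 + 3/8 * e^3) + 9/32 * e^5)) \<in> O[at 0](\<lambda>e. e^4 * e^2)"
    by (rule sum_in_bigo(1)[OF sum_in_bigo(2)])
  moreover have "(\<lambda>e::real. e^4 * e^2) = (\<lambda>e. e^6)"
    by (simp flip: power_add)
  ultimately show ?thesis
    by (simp add: algebra_simps power2_eq_square)
qed

lemma Qfun_feps_leading: "(\<lambda>e. Qfun (feps e) - 3/2 * e^2) \<in> O[at 0](\<lambda>e. e^3)"
proof -
  have "(\<lambda>e. Qfun (feps e) - (3/2 * e^2 + 3/8 * e^3)) \<in> O[at 0](\<lambda>e. e^3)"
    by (rule landau_o.big.trans[OF Qfun_feps_expansion]) real_asymp
  moreover have "(\<lambda>e::real. 3/8 * e^3) \<in> O[at 0](\<lambda>e. e^3)"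
    by simp
  ultimately have "(\<lambda>e. Qfun (feps e) - (3/2 * e^2 + 3/8 * e^3) + 3/8 * e^3) \<in> O[at 0](\<lambda>e. e^3)"
    by (rule sum_in_bigo(1))
  then show ?thesis
    by simp
qed

lemma Qfun_feps_asymp_equiv: "(\<lambda>e. Qfun (feps e)) \<sim>[at 0] (\<lambda>e. 3/2 * e^2)"
  by (rule smallo_imp_asymp_equiv, rule landau_o.big_small_trans[OF Qfun_feps_leading]) real_asymp

lemma IDQ_defect_eventually_neg:
  "\<forall>\<^sub>F e in at_right 0. Ifun (feps e) * Dfun (feps e) - (Qfun (feps e))^2 < 0"
proof -
  have "(\<lambda>e. Ifun (feps e) * Dfun (feps e) - (Qfun (feps e))^2) \<sim>[at 0] (\<lambda>e. - 9/32 * e^5)"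
    by (rule smallo_imp_asymp_equiv, rule landau_o.big_small_trans[OF IDQ_defect_expansion])
      real_asymp
  then have "\<forall>\<^sub>F e in at 0. Ifun (feps e) * Dfun (feps e) - (Qfun (feps e))^2 < 0 \<longleftrightarrow> - 9/32 * e^5 < 0"
    by (rule asymp_equiv_eventually_neg_iff)
  then have "\<forall>\<^sub>F e in at_right 0.
      Ifun (feps e) * Dfun (feps e) - (Qfun (feps e))^2 < 0 \<longleftrightarrow> - 9/32 * e^5 < (0::real)"
    by (rule filter_leD[OF at_le, rotated]) simp
  then show ?thesis
    using eventually_at_right_less[of 0] by eventually_elim simp
qed

text \<open>The \<open>\<epsilon>\<^sup>5\<close> terms of \<open>I D - Q\<^sup>2\<close> and \<open>\<epsilon>/8 \<cdot> Q\<^sup>2\<close> cancel.\<close>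

lemma IDQ_ratio_numerator:
  "(\<lambda>e. Ifun (feps e) * Dfun (feps e) - (Qfun (feps e))^2 + e / 8 * (Qfun (feps e))^2)
     \<in> O[at 0](\<lambda>e. e^6)"
proof -
  define Q where "Q e = Qfun (feps e)" for e
  have "(\<lambda>e. Q e * Q e - 3/2 * e^2 * (3/2 * e^2)) \<in> O[at 0](\<lambda>e. e^3 * e^2)"
    unfolding Q_def by (rule bigo_product_expansion[OF Qfun_feps_leading Qfun_feps_leading]) real_asymp+
  then have "(\<lambda>e. e / 8 * (Q e * Q e - 3/2 * e^2 * (3/2 * e^2))) \<in> O[at 0](\<lambda>e. e^(1 + 5))"
    by (intro bigo_power_mult) (simp_all flip: power_add)
  then have "(\<lambda>e. (Ifun (feps e) * Dfun (feps e) - (Q e)^2 - (- 9/32 * e^5))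
      + e / 8 * (Q e * Q e - 3/2 * e^2 * (3/2 * e^2))) \<in> O[at 0](\<lambda>e. e^6)"
    using IDQ_defect_expansion unfolding Q_def by (intro sum_in_bigo(1)) simp_all
  moreover have "(\<lambda>e. (Ifun (feps e) * Dfun (feps e) - (Q e)^2 - (- 9/32 * e^5))
      + e / 8 * (Q e * Q e - 3/2 * e^2 * (3/2 * e^2)))
      = (\<lambda>e. Ifun (feps e) * Dfun (feps e) - (Q e)^2 + e / 8 * (Q e)^2)"
    by (simp add: fun_eq_iff field_simps eval_nat_numeral)
  ultimately show ?thesis
    unfolding Q_def by simp
qed

lemma IDQ_ratio_expansion:
  "(\<lambda>e. Ifun (feps e) * Dfun (feps e) / (Qfun (feps e))^2 - (1 - 1/8 * e)) \<in> O[at 0](\<lambda>e. e^2)"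
proof -
  define Q where "Q e = Qfun (feps e)" for e
  define N where "N = (\<lambda>e. Ifun (feps e) * Dfun (feps e) - (Q e)^2 + e / 8 * (Q e)^2)"
  have Q_equiv: "Q \<sim>[at 0] (\<lambda>e. 3/2 * e^2)"
    unfolding Q_def by (rule Qfun_feps_asymp_equiv)
  have Q_nonzero: "\<forall>\<^sub>F e in at 0. (Q e)^2 \<noteq> 0"
    using asymp_equiv_eventually_zeros[OF Q_equiv] eventually_neq_at_within[of 0 0 UNIV]
    by eventually_elim auto
  have "(\<lambda>e::real. e^4) \<in> O[at 0](\<lambda>e. (3/2 * e^2)^2)"
    by real_asymp
  also have "(\<lambda>e. (3/2 * e^2)^2) \<in> O[at 0](\<lambda>e. (Q e)^2)"
    using asymp_equiv_imp_bigomega[OF asymp_equiv_power[OF Q_equiv, of 2]]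
    by (simp add: bigomega_iff_bigo)
  finally have "(\<lambda>e. e^2 * e^4) \<in> O[at 0](\<lambda>e. e^2 * (Q e)^2)"
    by (rule landau_o.big.mult_left)
  moreover have "(\<lambda>e::real. e^2 * e^4) = (\<lambda>e. e^6)"
    by (simp flip: power_add)
  then have "N \<in> O[at 0](\<lambda>e. e^2 * e^4)"
    using IDQ_ratio_numerator by (simp only: N_def Q_def)
  ultimately have "(\<lambda>e. N e / (Q e)^2) \<in> O[at 0](\<lambda>e. e^2)"
    by (simp add: landau_o.big.divide_eq2[OF Q_nonzero] landau_o.big.trans)
  moreover have "\<forall>\<^sub>F e in at 0.
      N e / (Q e)^2 = Ifun (feps e) * Dfun (feps e) / (Q e)^2 - (1 - 1/8 * e)"
    using Q_nonzero by eventually_elim (simp add: N_def field_simps)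
  ultimately show ?thesis
    unfolding Q_def by (simp add: landau_o.big.in_cong)
qed

theorem proposition3p2:
  shows "(\<lambda>e. Ifun (feps e) - (3/2 * e^2 + 3/4 * e^3)) \<in> O[at 0](\<lambda>e. e^4) \<and>
         (\<lambda>e. Qfun (feps e) - (3/2 * e^2 + 3/8 * e^3)) \<in> O[at 0](\<lambda>e. e^4) \<and>
         (\<lambda>e. Dfun (feps e) - (3/2 * e^2 - 3/16 * e^3)) \<in> O[at 0](\<lambda>e. e^4) \<and>
         (\<lambda>e. Ifun (feps e) * Dfun (feps e) - (Qfun (feps e))^2 - (- 9/32 * e^5))
           \<in> O[at 0](\<lambda>e. e^6) \<and>
         (\<lambda>e. Ifun (feps e) * Dfun (feps e) / (Qfun (feps e))^2 - (1 - 1/8 * e))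
           \<in> O[at 0](\<lambda>e. e^2) \<and>
         (\<forall>\<^sub>F e in at_right 0. Ifun (feps e) * Dfun (feps e) - (Qfun (feps e))^2 < 0)"
  using Ifun_feps_expansion Qfun_feps_expansion Dfun_feps_expansion IDQ_defect_expansion
    IDQ_ratio_expansion IDQ_defect_eventually_neg
  by blast

end
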